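(* Let $G$ be a graph with no proper 1-join, let $u$ be a 1-cutset of $G$, let $C$ be a connected component of $G\setminus\{u\}$, and let $\overline{C}=C\cup\{u\}$ (as an induced subgraph of $G$). Then $\overline{C}$ has no proper 1-join.
   Context: All graphs are finite and simple. A connected graph $G$ has a 1-cutset $u$ if $G\setminus\{u\}$ has at least two connected components. A 1-join of $G$ is a partition of $V(G)$ into sets $X,Y$ with $|X|,|Y|\ge2$ such that there exist nonempty $A\subseteq X$ and $B\subseteq Y$ with $A$ complete to $B$ (all edges present), $X$ anticomplete to $Y\setminus B$ (no edges), and $Y$ anticomplete to $X\setminus A$; it is denoted $(X,Y,A,B)$. A 1-join $(X,Y,A,B)$ is proper if $A$ and $B$ are stable sets of size at least 2. *)

theory Defs
  imports Main
begin

definition graph :: "'a set \<Rightarrow> ('a \<Rightarrow> 'a \<Rightarrow> bool) \<Rightarrow> bool" where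
  "graph V E \<longleftrightarrow> finite V \<and> (\<forall>x y. E x y \<longrightarrow> x \<in> V \<and> y \<in> V)
     \<and> (\<forall>x y. E x y \<longrightarrow> E y x) \<and> (\<forall>x. \<not> E x x)"

definition induced :: "('a \<Rightarrow> 'a \<Rightarrow> bool) \<Rightarrow> 'a set \<Rightarrow> ('a \<Rightarrow> 'a \<Rightarrow> bool)" where
  "induced E S = (\<lambda>x y. E x y \<and> x \<in> S \<and> y \<in> S)"

definition reach :: "'a set \<Rightarrow> ('a \<Rightarrow> 'a \<Rightarrow> bool) \<Rightarrow> 'a \<Rightarrow> 'a \<Rightarrow> bool" where
  "reach S E x y \<longleftrightarrow> x \<in> S \<and> y \<in> S \<and> (induced E S)\<^sup>*\<^sup>* x y"

definition connected_graph :: "'a set \<Rightarrow> ('a \<Rightarrow> 'a \<Rightarrow> bool) \<Rightarrow> bool" where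
  "connected_graph V E \<longleftrightarrow> V \<noteq> {} \<and> (\<forall>x\<in>V. \<forall>y\<in>V. reach V E x y)"

definition component :: "'a set \<Rightarrow> ('a \<Rightarrow> 'a \<Rightarrow> bool) \<Rightarrow> 'a set \<Rightarrow> bool" where
  "component S E C \<longleftrightarrow> (\<exists>x\<in>S. C = {y. reach S E x y})"

definition one_cutset :: "'a set \<Rightarrow> ('a \<Rightarrow> 'a \<Rightarrow> bool) \<Rightarrow> 'a \<Rightarrow> bool" where
  "one_cutset V E u \<longleftrightarrow> connected_graph V E \<and> u \<in> V \<and>
     (\<exists>C1 C2. component (V - {u}) E C1 \<and> component (V - {u}) E C2 \<and> C1 \<noteq> C2)"

definition complete_to :: "('a \<Rightarrow> 'a \<Rightarrow> bool) \<Rightarrow> 'a set \<Rightarrow> 'a set \<Rightarrow> bool" where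
  "complete_to E A B \<longleftrightarrow> (\<forall>a\<in>A. \<forall>b\<in>B. E a b)"

definition anticomplete_to :: "('a \<Rightarrow> 'a \<Rightarrow> bool) \<Rightarrow> 'a set \<Rightarrow> 'a set \<Rightarrow> bool" where
  "anticomplete_to E A B \<longleftrightarrow> (\<forall>a\<in>A. \<forall>b\<in>B. \<not> E a b)"

definition stable :: "('a \<Rightarrow> 'a \<Rightarrow> bool) \<Rightarrow> 'a set \<Rightarrow> bool" where
  "stable E A \<longleftrightarrow> (\<forall>a\<in>A. \<forall>b\<in>A. \<not> E a b)"

definition one_join :: "'a set \<Rightarrow> ('a \<Rightarrow> 'a \<Rightarrow> bool) \<Rightarrow> 'a set \<Rightarrow> 'a set \<Rightarrow> 'a set \<Rightarrow> 'a set \<Rightarrow> bool" where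
  "one_join V E X Y A B \<longleftrightarrow> X \<union> Y = V \<and> X \<inter> Y = {} \<and> card X \<ge> 2 \<and> card Y \<ge> 2 \<and>
     A \<subseteq> X \<and> A \<noteq> {} \<and> B \<subseteq> Y \<and> B \<noteq> {} \<and> complete_to E A B \<and>
     anticomplete_to E X (Y - B) \<and> anticomplete_to E (X - A) Y"

definition proper_one_join :: "'a set \<Rightarrow> ('a \<Rightarrow> 'a \<Rightarrow> bool) \<Rightarrow> 'a set \<Rightarrow> 'a set \<Rightarrow> 'a set \<Rightarrow> 'a set \<Rightarrow> bool" where
  "proper_one_join V E X Y A B \<longleftrightarrow> one_join V E X Y A B \<and>
     stable E A \<and> stable E B \<and> card A \<ge> 2 \<and> card B \<ge> 2"

definition has_proper_one_join :: "'a set \<Rightarrow> ('a \<Rightarrow> 'a \<Rightarrow> bool) \<Rightarrow> bool" where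
  "has_proper_one_join V E \<longleftrightarrow> (\<exists>X Y A B. proper_one_join V E X Y A B)"

end

theory Submission
  imports Defs
begin

text \<open>A component C of G - u sends no edges to the rest of G - u, so every vertex outside
  C \<union> {u} is anticomplete to C. Given a proper 1-join of the graph induced on C \<union> {u}, swap
  its sides if necessary so that u is on the X-side; then the other side lies in C, and adding
  all vertices outside C \<union> {u} to the X-side yields a proper 1-join of G itself.\<close>

lemma symp_induced: "symp E \<Longrightarrow> symp (induced E S)"
  unfolding symp_def induced_def by blast

lemma anticomplete_to_sym: "symp E \<Longrightarrow> anticomplete_to E A B \<Longrightarrow> anticomplete_to E B A"
  unfolding symp_def anticomplete_to_def by blast

lemma proper_one_join_swap:
  assumes "symp E" and "proper_one_join V E X Y A B"
  shows "proper_one_join V E Y X B A"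
proof -
  have "complete_to E B A" if "complete_to E A B"
    using assms(1) that unfolding symp_def complete_to_def by blast
  with assms show ?thesis
    unfolding proper_one_join_def one_join_def by (auto intro: anticomplete_to_sym)
qed

lemma component_subset: "component S E C \<Longrightarrow> C \<subseteq> S"
  unfolding component_def reach_def by auto

lemma component_anticomplete_rest:
  assumes "component S E C"
  shows "anticomplete_to E C (S - C)"
  unfolding anticomplete_to_def
proof (intro ballI notI)
  fix c d assume c: "c \<in> C" and d: "d \<in> S - C" and "E c d"
  obtain x where "x \<in> S" and C_def: "C = {y. reach S E x y}"
    using assms unfolding component_def by blast
  have "(induced E S)\<^sup>*\<^sup>* x c"
    using c C_def unfolding reach_def by blast
  moreover have "induced E S c d"
    using \<open>E c d\<close> c d component_subset[OF assms] unfolding induced_def by blast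
  ultimately have "(induced E S)\<^sup>*\<^sup>* x d"
    by (rule rtranclp.rtrancl_into_rtrancl)
  with \<open>x \<in> S\<close> d have "reach S E x d"
    unfolding reach_def by blast
  with d C_def show False by blast
qed

lemma proper_one_join_extend:
  assumes "finite V" and "S \<subseteq> V"
    and join: "proper_one_join S (induced E S) X Y A B"
    and rest: "anticomplete_to E (V - S) Y"
  shows "proper_one_join V E (X \<union> (V - S)) Y A B"
proof -
  from join have XY: "X \<union> Y = S" "X \<inter> Y = {}" and "card X \<ge> 2" "card Y \<ge> 2"
    and AB: "A \<subseteq> X" "A \<noteq> {}" "B \<subseteq> Y" "B \<noteq> {}" "card A \<ge> 2" "card B \<ge> 2"
    and "complete_to (induced E S) A B"
    and anti: "anticomplete_to (induced E S) X (Y - B)" "anticomplete_to (induced E S) (X - A) Y"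
    and "stable (induced E S) A" "stable (induced E S) B"
    unfolding proper_one_join_def one_join_def by auto
  have "card X \<le> card (X \<union> (V - S))"
    using assms(1,2) XY(1) by (intro card_mono) (auto intro: finite_subset)
  with \<open>card X \<ge> 2\<close> have "card (X \<union> (V - S)) \<ge> 2" by linarith
  moreover have "complete_to E A B"
    using \<open>complete_to (induced E S) A B\<close> unfolding complete_to_def induced_def by blast
  moreover have "anticomplete_to E (X \<union> (V - S)) (Y - B)"
    using anti(1) rest XY(1) unfolding anticomplete_to_def induced_def by blast
  moreover have "anticomplete_to E (X \<union> (V - S) - A) Y"
    using anti(2) rest XY(1) unfolding anticomplete_to_def induced_def by blast
  moreover have "stable E A" "stable E B"
    using \<open>stable (induced E S) A\<close> \<open>stable (induced E S) B\<close> AB XY(1)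
    unfolding stable_def induced_def by blast+
  ultimately show ?thesis
    using XY AB \<open>card Y \<ge> 2\<close> assms(2)
    unfolding proper_one_join_def one_join_def by blast
qed

theorem mainTheorem8:
  fixes V :: "'a set" and E :: "'a \<Rightarrow> 'a \<Rightarrow> bool" and u :: 'a and C :: "'a set"
  assumes "graph V E"
    and "\<not> has_proper_one_join V E"
    and "one_cutset V E u"
    and "component (V - {u}) E C"
  shows "\<not> has_proper_one_join (C \<union> {u}) (induced E (C \<union> {u}))"
proof
  let ?S = "C \<union> {u}"
  assume "has_proper_one_join ?S (induced E ?S)"
  have "symp E" and "finite V"
    using assms(1) unfolding graph_def symp_def by auto
  have "?S \<subseteq> V"
    using assms(3) component_subset[OF assms(4)] unfolding one_cutset_def by blast
  obtain X Y A B where join: "proper_one_join ?S (induced E ?S) X Y A B" and "u \<notin> Y"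
  proof -
    obtain X Y A B where j: "proper_one_join ?S (induced E ?S) X Y A B"
      using \<open>has_proper_one_join ?S (induced E ?S)\<close> unfolding has_proper_one_join_def by blast
    then have "u \<notin> Y \<or> u \<notin> X"
      unfolding proper_one_join_def one_join_def by blast
    with j proper_one_join_swap[OF symp_induced[OF \<open>symp E\<close>] j] that show thesis by blast
  qed
  then have "Y \<subseteq> C"
    unfolding proper_one_join_def one_join_def by blast
  moreover have "anticomplete_to E (V - ?S) C"
    using anticomplete_to_sym[OF \<open>symp E\<close> component_anticomplete_rest[OF assms(4)]]
    by (simp add: Diff_insert2 [symmetric] insert_commute)
  ultimately have "anticomplete_to E (V - ?S) Y"
    unfolding anticomplete_to_def by blast
  from proper_one_join_extend[OF \<open>finite V\<close> \<open>?S \<subseteq> V\<close> join this] assms(2) show False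
    unfolding has_proper_one_join_def by blast
qed

end
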